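(* Let $n\ge1$. Every $1$-almost-increasing permutation $\pi\in S_n$ can be written as $\pi=x_n\circ x_{n-1}\circ\cdots\circ x_1(e_0)$ for exactly one word $x_n\cdots x_1$ of length $n$ over the alphabet $\{\rho_{1,1},\rho_{1,2},\rho_{2,1},\rho_{2,2}\}$ such that $x_1=\rho_{1,1}$ and the word contains neither $\rho_{2,1}\rho_{1,1}$ nor $\rho_{2,2}\rho_{1,1}$ as a substring of consecutive letters.
   Context: A permutation $\pi\in S_n$ (one-line form) is $1$-almost-increasing if for every $i$ there is at most one $j\le i$ with $\pi_j>i$; equivalently, it avoids $4321,4312,3421,3412$. $e_0$ is the empty permutation. For $\pi\in S_m$ and $1\le i,j\le m+1$, $\rho_{i,j}(\pi)\in S_{m+1}$ is obtained by increasing by $1$ every entry of $\pi$ that is $\ge i$ and inserting the value $i$ at position $j$; in particular $\rho_{1,1}(e_0)=[1]$. A word $x_n\cdots x_1$ denotes the composition with the rightmost letter $x_1$ applied first. *)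

theory Defs
  imports Main
begin

text \<open>Permutations in one-line form are lists of naturals: entry \<open>\<pi>_j\<close> is \<open>\<pi> ! (j-1)\<close>.\<close>

definition is_perm :: "nat \<Rightarrow> nat list \<Rightarrow> bool" where
  "is_perm n p \<longleftrightarrow> length p = n \<and> distinct p \<and> set p = {1..n}"

definition almost_inc1 :: "nat list \<Rightarrow> bool" where
  "almost_inc1 p \<longleftrightarrow>
     (\<forall>i \<in> {1..length p}. card {j \<in> {1..i}. p ! (j - 1) > i} \<le> 1)"

definition rho :: "nat \<Rightarrow> nat \<Rightarrow> nat list \<Rightarrow> nat list" where
  "rho i j p = (let q = map (\<lambda>x. if x \<ge> i then x + 1 else x) p
                in take (j - 1) q @ [i] @ drop (j - 1) q)"

text \<open>A word \<open>x_n \<cdots> x_1\<close> is the list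
  \<open>[x_n, ..., x_1]\<close> (left to right); its value on \<open>e_0\<close> applies \<open>x_1\<close> first.\<close>
definition alphabet :: "(nat \<times> nat) set" where
  "alphabet = {(1,1), (1,2), (2,1), (2,2)}"

definition eval_word :: "(nat \<times> nat) list \<Rightarrow> nat list" where
  "eval_word w = foldr (\<lambda>(i, j) p. rho i j p) w []"

definition has_forbidden :: "(nat \<times> nat) list \<Rightarrow> bool" where
  "has_forbidden w \<longleftrightarrow>
     (\<exists>k. Suc k < length w \<and> (w ! k = (2,1) \<or> w ! k = (2,2)) \<and> w ! Suc k = (1,1))"

end

theory Submission
  imports Defs
begin

(* A 1-almost-increasing permutation of length at least 2 has 1 or 2 among its first two
   entries, so it is rho i j q for a letter (i, j) of the alphabet, where q is again a
   1-almost-increasing permutation; iterating gives a word. The letter applied last is read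
   off the first two entries, except that rho 2 j q cannot be told apart from the other
   letters when q starts with 1. Permutations built by admissible words start with 1 exactly
   when their last letter is rho 1 1, so excluding the factors rho 2 j rho 1 1 is precisely what
   makes the letter, and by induction the whole word, unique. *)

lemma set_insert_at: "set (take k xs @ y # drop k xs) = insert y (set xs)"
  by (metis append_take_drop_id insert_is_Un set_append set_simps(2) sup_left_commute)

lemma distinct_insert_at: "distinct (take k xs @ y # drop k xs) \<longleftrightarrow> distinct (y # xs)"
proof -
  have "length (take k xs @ y # drop k xs) = length (y # xs)" by simp
  then show ?thesis
    by (metis distinct_card card_distinct set_insert_at list.set(2))
qed

lemma take_Suc_insert_at:
  "a \<le> k \<Longrightarrow> take (Suc k) (take a xs @ y # drop a xs) = take a (take k xs) @ y # drop a (take k xs)"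
  by (cases "a \<le> length xs") (auto simp: min_def not_le Suc_diff_le drop_take)

lemma ex_nat_split: "(\<exists>k::nat. P k) \<longleftrightarrow> P 0 \<or> (\<exists>k. P (Suc k))"
  by (metis old.nat.exhaust)

definition bump :: "nat \<Rightarrow> nat \<Rightarrow> nat" where
  "bump i x = (if i \<le> x then x + 1 else x)"

definition unbump :: "nat \<Rightarrow> nat \<Rightarrow> nat" where
  "unbump i x = (if i < x then x - 1 else x)"

lemma bump_unbump: "x \<noteq> i \<Longrightarrow> bump i (unbump i x) = x"
  by (auto simp: bump_def unbump_def)

lemma inj_bump: "inj (bump i)"
  by (auto simp: inj_def bump_def split: if_splits)

lemma bump_image_atLeastAtMost:
  assumes "i \<in> {1..Suc m}"
  shows "bump i ` {1..m} = {1..Suc m} - {i}"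
proof
  show "bump i ` {1..m} \<subseteq> {1..Suc m} - {i}"
    using assms by (auto simp: bump_def)
  show "{1..Suc m} - {i} \<subseteq> bump i ` {1..m}"
  proof
    fix y assume y: "y \<in> {1..Suc m} - {i}"
    then have "unbump i y \<in> {1..m}"
      using assms by (auto simp: unbump_def)
    moreover have "y = bump i (unbump i y)"
      using y by (simp add: bump_unbump)
    ultimately show "y \<in> bump i ` {1..m}" by blast
  qed
qed

lemma rho_bump: "rho i j p = take (j - 1) (map (bump i) p) @ i # drop (j - 1) (map (bump i) p)"
  by (simp add: rho_def Let_def bump_def[abs_def])

lemma length_rho [simp]: "length (rho i j p) = Suc (length p)"
  by (simp add: rho_def Let_def)

lemma set_rho: "set (rho i j p) = insert i (bump i ` set p)"
  unfolding rho_bump set_insert_at by simp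

lemma inj_rho: "inj (rho i j)"
proof (rule injI)
  fix p q assume eq: "rho i j p = rho i j q"
  then have "length p = length q" by (metis length_rho Suc_inject)
  with eq have "map (bump i) p = map (bump i) q"
    unfolding rho_bump by (metis (no_types) append_eq_append_conv append_take_drop_id length_map length_take list.inject)
  then show "p = q" using inj_bump by simp
qed

lemma is_perm_rhoD:
  assumes "is_perm (Suc m) (rho i j p)"
  shows "is_perm m p"
proof -
  have dist: "distinct (rho i j p)" and set: "insert i (bump i ` set p) = {1..Suc m}"
    and len: "length p = m"
    using assms by (auto simp: is_perm_def set_rho)
  have "distinct (map (bump i) p)" and notin: "i \<notin> bump i ` set p"
    using dist unfolding rho_bump distinct_insert_at by auto
  then have "distinct p"
    by (simp add: distinct_map)
  have "i \<in> {1..Suc m}"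
    using set by blast
  have "bump i ` set p = {1..Suc m} - {i}"
    using set notin by blast
  also have "\<dots> = bump i ` {1..m}"
    using bump_image_atLeastAtMost[OF \<open>i \<in> {1..Suc m}\<close>] by simp
  finally show ?thesis
    using \<open>distinct p\<close> len inj_bump by (simp add: is_perm_def inj_image_eq_iff)
qed

lemma take_Suc_rho: "j \<le> Suc k \<Longrightarrow> take (Suc k) (rho i j p) = rho i j (take k p)"
  unfolding rho_bump by (simp only: take_Suc_insert_at) (simp_all add: take_map)

lemma length_filter_rho:
  "length (filter P (rho i j p)) = length (filter P (i # map (bump i) p))"
proof -
  have "length (filter P (take k xs @ y # drop k xs)) = length (filter P (y # xs))" for k xs and y :: nat
  proof -
    have "length (filter P (take k xs)) + length (filter P (drop k xs)) = length (filter P xs)"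
      by (metis append_take_drop_id filter_append length_append)
    then show ?thesis by simp
  qed
  then show ?thesis by (simp only: rho_bump)
qed

lemma almost_inc1_iff:
  "almost_inc1 p \<longleftrightarrow> (\<forall>k\<in>{1..length p}. length (filter (\<lambda>x. k < x) (take k p)) \<le> 1)"
proof -
  have "card {j \<in> {1..k}. k < p ! (j - 1)} = length (filter (\<lambda>x. k < x) (take k p))"
    if "k \<le> length p" for k
  proof -
    have "{j \<in> {1..k}. k < p ! (j - 1)} = Suc ` {j. j < k \<and> k < p ! j}"
      by (force simp: image_iff Suc_le_eq gr0_conv_Suc)
    also have "{j. j < k \<and> k < p ! j} = {j. j < length (take k p) \<and> k < take k p ! j}"
      using that by auto
    finally have "card {j \<in> {1..k}. k < p ! (j - 1)} = card {j. j < length (take k p) \<and> k < take k p ! j}"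
      by (simp add: card_image)
    then show ?thesis by (simp add: length_filter_conv_card)
  qed
  then show ?thesis unfolding almost_inc1_def by simp
qed

lemma almost_inc1_rhoD:
  assumes "almost_inc1 (rho i j p)" and "i \<le> 2" and "j \<le> 2"
  shows "almost_inc1 p"
  unfolding almost_inc1_iff
proof
  fix k assume k: "k \<in> {1..length p}"
  have "(\<lambda>x. Suc k < bump i x) = (\<lambda>x. k < x)"
    using k assms(2) by (auto simp: bump_def)
  then have "length (filter (\<lambda>x. k < x) (take k p))
      = length (filter (\<lambda>x. Suc k < x) (map (bump i) (take k p)))"
    by (simp add: filter_map comp_def)
  also have "\<dots> = length (filter (\<lambda>x. Suc k < x) (take (Suc k) (rho i j p)))"
    using k assms(2,3) by (simp add: take_Suc_rho length_filter_rho)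
  also have "\<dots> \<le> 1"
    using assms(1) k by (simp add: almost_inc1_iff)
  finally show "length (filter (\<lambda>x. k < x) (take k p)) \<le> 1" .
qed

definition unrho :: "nat \<Rightarrow> nat \<Rightarrow> nat list \<Rightarrow> nat list" where
  "unrho i j p = map (unbump i) (take (j - 1) p @ drop j p)"

lemma rho_unrho:
  assumes "distinct p" and "j \<in> {1..length p}" and "p ! (j - 1) = i"
  shows "rho i j (unrho i j p) = p"
proof -
  define xs where "xs = take (j - 1) p @ drop j p"
  have "j - 1 < length p"
    using assms(2) by auto
  then have p: "p = take (j - 1) p @ i # drop j p"
    using assms(2,3) id_take_nth_drop[of "j - 1" p] by simp
  have "distinct (take (j - 1) p @ i # drop j p)"
    using assms(1) by (subst p[symmetric])
  then have "i \<notin> set xs"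
    unfolding xs_def by auto
  then have "map (bump i) (unrho i j p) = xs"
    unfolding unrho_def xs_def[symmetric] by (induction xs) (auto simp: bump_unbump)
  moreover have "take (j - 1) xs = take (j - 1) p" and "drop (j - 1) xs = drop j p"
    using assms(2) unfolding xs_def by auto
  ultimately show ?thesis
    using p by (simp add: rho_bump)
qed

lemma eval_word_Cons [simp]: "eval_word ((i, j) # w) = rho i j (eval_word w)"
  by (simp add: eval_word_def)

lemma length_eval_word [simp]: "length (eval_word w) = length w"
  by (induction w) (auto simp: eval_word_def)

lemma has_forbidden_singleton [simp]: "\<not> has_forbidden [x]"
  by (simp add: has_forbidden_def)

lemma has_forbidden_Cons_Cons:
  "has_forbidden (x # y # w) \<longleftrightarrow> ((x = (2,1) \<or> x = (2,2)) \<and> y = (1,1)) \<or> has_forbidden (y # w)"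
  unfolding has_forbidden_def by (subst ex_nat_split) simp

inductive admissible :: "(nat \<times> nat) list \<Rightarrow> bool" where
  single: "admissible [(1,1)]"
| Cons: "admissible w \<Longrightarrow> (i, j) \<in> alphabet \<Longrightarrow> (i = 2 \<longrightarrow> hd w \<noteq> (1,1)) \<Longrightarrow> admissible ((i, j) # w)"

lemma admissible_not_Nil: "admissible w \<Longrightarrow> w \<noteq> []"
  by (cases rule: admissible.cases) auto

lemma admissible_ConsD: "admissible (x # w) \<Longrightarrow> w \<noteq> [] \<Longrightarrow> admissible w"
  by (cases rule: admissible.cases) auto

lemma admissible_iff:
  "admissible w \<longleftrightarrow> w \<noteq> [] \<and> set w \<subseteq> alphabet \<and> last w = (1,1) \<and> \<not> has_forbidden w"
proof
  show "admissible w \<Longrightarrow> w \<noteq> [] \<and> set w \<subseteq> alphabet \<and> last w = (1,1) \<and> \<not> has_forbidden w"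
  proof (induction rule: admissible.induct)
    case (Cons w i j)
    then obtain y w' where "w = y # w'" by (cases w) auto
    with Cons show ?case by (auto simp: has_forbidden_Cons_Cons)
  qed (auto simp: alphabet_def)
next
  show "w \<noteq> [] \<and> set w \<subseteq> alphabet \<and> last w = (1,1) \<and> \<not> has_forbidden w \<Longrightarrow> admissible w"
  proof (induction w)
    case (Cons x w)
    show ?case
    proof (cases w)
      case Nil
      then show ?thesis using Cons.prems admissible.single by auto
    next
      case (Cons y w')
      have "w \<noteq> [] \<and> set w \<subseteq> alphabet \<and> last w = (1,1) \<and> \<not> has_forbidden w"
        using Cons.prems \<open>w = y # w'\<close> by (simp add: has_forbidden_Cons_Cons)
      then have "admissible w"
        by (rule Cons.IH)
      obtain i j where x: "x = (i, j)"
        by (cases x)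
      have "(i, j) \<in> alphabet"
        using Cons.prems x by simp
      moreover have "i = 2 \<longrightarrow> hd w \<noteq> (1,1)"
        using Cons.prems x \<open>w = y # w'\<close> calculation by (auto simp: alphabet_def has_forbidden_Cons_Cons)
      ultimately show ?thesis
        using \<open>admissible w\<close> x admissible.Cons by blast
    qed
  qed simp
qed

definition first_letter :: "nat list \<Rightarrow> nat \<times> nat" where
  "first_letter p =
     (if p ! 0 = 1 then (1,1) else if p ! 1 = 1 then (1,2) else if p ! 0 = 2 then (2,1) else (2,2))"

lemma first_letter_eq_1_1_iff: "first_letter p = (1,1) \<longleftrightarrow> p ! 0 = 1"
  by (simp add: first_letter_def)

lemma first_letter_rho:
  assumes "p \<noteq> []" and "(i, j) \<in> alphabet" and "i = 2 \<longrightarrow> p ! 0 \<noteq> 1"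
  shows "first_letter (rho i j p) = (i, j)"
proof -
  obtain x p' where p: "p = x # p'"
    using assms(1) by (cases p) auto
  consider "i = 1" "j = 1" | "i = 1" "j = 2" | "i = 2" "j = 1" | "i = 2" "j = 2"
    using assms(2) by (auto simp: alphabet_def)
  then show ?thesis
    using assms(3) unfolding p by cases (simp_all add: first_letter_def rho_def)
qed

lemma first_letter_eval_word: "admissible w \<Longrightarrow> first_letter (eval_word w) = hd w"
proof (induction rule: admissible.induct)
  case single
  then show ?case by (simp add: eval_word_def rho_def first_letter_def)
next
  case (Cons w i j)
  have "eval_word w \<noteq> []"
    using admissible_not_Nil[OF Cons.hyps(1)] by (metis length_eval_word length_0_conv)
  moreover have "i = 2 \<longrightarrow> eval_word w ! 0 \<noteq> 1"
    using Cons.hyps(3) Cons.IH first_letter_eq_1_1_iff by metis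
  ultimately show ?case
    using Cons.hyps(2) by (simp add: first_letter_rho)
qed

lemma admissible_singleton: "admissible [x] \<Longrightarrow> x = (1,1)"
  by (cases rule: admissible.cases) (auto dest: admissible_not_Nil)

lemma admissible_eval_word_inj:
  "admissible v \<Longrightarrow> admissible w \<Longrightarrow> eval_word v = eval_word w \<Longrightarrow> v = w"
proof (induction v arbitrary: w rule: admissible.induct)
  case single
  have "length (eval_word [(1,1)]) = length (eval_word w)"
    using single.prems(2) by (rule arg_cong)
  then have "length w = 1"
    by simp
  then obtain x where "w = [x]"
    by (metis One_nat_def length_0_conv length_Suc_conv)
  then show ?case
    using single.prems(1) admissible_singleton by blast
next
  case (Cons v i j)
  obtain h w' where w: "w = h # w'"
    using admissible_not_Nil[OF Cons.prems(1)] by (cases w) auto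
  have "h = (i, j)"
    using first_letter_eval_word[OF Cons.prems(1)] first_letter_eval_word[OF admissible.Cons[OF Cons.hyps]]
      Cons.prems(2) w by simp
  have "length (eval_word ((i, j) # v)) = length (eval_word w)"
    using Cons.prems(2) by (rule arg_cong)
  then have "length w' = length v"
    using w by simp
  then have "w' \<noteq> []"
    using admissible_not_Nil[OF Cons.hyps(1)] by auto
  then have "admissible w'"
    using Cons.prems(1) w admissible_ConsD by blast
  moreover have "eval_word v = eval_word w'"
    using Cons.prems(2) w \<open>h = (i, j)\<close> inj_rho[of i j] by (simp add: inj_eq)
  ultimately show ?case
    using Cons.IH w \<open>h = (i, j)\<close> by simp
qed

lemma first_letter_of_perm:
  assumes "is_perm (Suc m) p" and "almost_inc1 p" and "1 \<le> m" and "first_letter p = (i, j)"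
  shows "(i, j) \<in> alphabet" and "p ! (j - 1) = i" and "i = 2 \<longrightarrow> unrho i j p ! 0 \<noteq> 1"
proof -
  have len: "length p = Suc m"
    using assms(1) by (simp add: is_perm_def)
  obtain a p' where "p = a # p'"
    using len by (cases p) auto
  moreover obtain b r where "p' = b # r"
    using len assms(3) \<open>p = a # p'\<close> by (cases p') auto
  ultimately have p: "p = a # b # r"
    by simp
  have "a \<noteq> b" and "1 \<le> a" and "1 \<le> b"
    using assms(1) unfolding is_perm_def p by auto
  have "2 \<in> {1..length p}"
    using len assms(3) by simp
  then have "length (filter (\<lambda>x. 2 < x) (take 2 p)) \<le> 1"
    using assms(2) unfolding almost_inc1_iff by blast
  then have "a \<le> 2 \<or> b \<le> 2"
    unfolding p by (auto split: if_splits)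
  with assms(4) \<open>a \<noteq> b\<close> \<open>1 \<le> a\<close> \<open>1 \<le> b\<close>
  show "(i, j) \<in> alphabet" and "p ! (j - 1) = i" and "i = 2 \<longrightarrow> unrho i j p ! 0 \<noteq> 1"
    unfolding p by (auto simp: first_letter_def alphabet_def unrho_def unbump_def split: if_splits)
qed

lemma admissible_word_exists:
  "is_perm n p \<Longrightarrow> almost_inc1 p \<Longrightarrow> 1 \<le> n \<Longrightarrow> \<exists>w. admissible w \<and> eval_word w = p"
proof (induction n arbitrary: p)
  case 0
  then show ?case by simp
next
  case (Suc m)
  show ?case
  proof (cases "m = 0")
    case True
    then have "p = [1]"
      using Suc.prems(1) unfolding is_perm_def by (cases p) auto
    then show ?thesis
      using admissible.single by (auto simp: eval_word_def rho_def)
  next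
    case False
    obtain i j where ij: "first_letter p = (i, j)"
      by (cases "first_letter p")
    have m: "1 \<le> m"
      using False by simp
    note letter = first_letter_of_perm[OF Suc.prems(1,2) m ij]
    define q where "q = unrho i j p"
    have "i \<le> 2" and "j \<in> {1..2}"
      using letter(1) by (auto simp: alphabet_def)
    moreover have "distinct p" and "length p = Suc m"
      using Suc.prems(1) by (auto simp: is_perm_def)
    ultimately have p: "rho i j q = p"
      unfolding q_def using m letter(2) by (intro rho_unrho) auto
    then have "is_perm m q" and "almost_inc1 q"
      using Suc.prems(1,2) is_perm_rhoD almost_inc1_rhoD \<open>i \<le> 2\<close> \<open>j \<in> {1..2}\<close> by auto
    then obtain w where w: "admissible w" "eval_word w = q"
      using Suc.IH m by blast
    have "i = 2 \<longrightarrow> hd w \<noteq> (1,1)"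
      using letter(3) first_letter_eval_word[OF w(1)] first_letter_eq_1_1_iff w(2) q_def by metis
    then have "admissible ((i, j) # w)"
      using w(1) letter(1) by (rule admissible.Cons[rotated 2])
    moreover have "eval_word ((i, j) # w) = p"
      using w(2) p by simp
    ultimately show ?thesis by blast
  qed
qed

theorem theorem7p5:
  fixes n :: nat and p :: "nat list"
  assumes "n \<ge> 1" and "is_perm n p" and "almost_inc1 p"
  shows "\<exists>!w. length w = n \<and> set w \<subseteq> alphabet \<and> last w = (1,1)
              \<and> \<not> has_forbidden w \<and> eval_word w = p"
proof -
  obtain w where w: "admissible w" "eval_word w = p"
    using admissible_word_exists assms by blast
  have "length (eval_word w) = length p"
    using w(2) by (rule arg_cong)
  then have "length w = n"
    using assms(2) by (simp add: is_perm_def)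
  show ?thesis
  proof (rule ex1I[of _ w])
    show "length w = n \<and> set w \<subseteq> alphabet \<and> last w = (1,1) \<and> \<not> has_forbidden w \<and> eval_word w = p"
      using w \<open>length w = n\<close> by (simp add: admissible_iff)
  next
    fix v
    assume v: "length v = n \<and> set v \<subseteq> alphabet \<and> last v = (1,1) \<and> \<not> has_forbidden v \<and> eval_word v = p"
    then have "admissible v"
      using assms(1) by (auto simp: admissible_iff)
    with v w show "v = w"
      using admissible_eval_word_inj by simp
  qed
qed

end
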